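(* Let $a=x_0<\cdots<x_N=b$ be a uniform partition with $x_j-x_{j-1}=h$ for all $j$, and let $s\in(0,3/2)$, $s\ne1/2$. Then the fractional stiffness matrix entries $$S_{jk}=\int_{\mathbb{R}}|\xi|^{2s}\,\mathscr{F}[\phi_j](\xi)\,\overline{\mathscr{F}[\phi_k](\xi)}\,d\xi,\qquad 1\le j,k\le N-1,$$ satisfy $$S_{jk}=\widehat C_s\,h^{1-2s}\sum_{i=-2}^{2}w_i\,\big|\,|k-j|+i\,\big|^{3-2s},\qquad w_0=6,\ w_{\pm1}=-4,\ w_{\pm2}=1,$$ where $\widehat C_s=\frac{1}{2\Gamma(4-2s)\cos(s\pi)}$. In particular $\mathbf S=(S_{jk})$ is a Toeplitz matrix.
   Context: $\phi_j$ ($1\le j\le N-1$) are the standard piecewise-linear hat functions on $\mathbb R$ associated with the nodes $x_0<\dots<x_N$ (equal to $1$ at $x_j$, $0$ at all other nodes, linear on each $[x_{\ell-1},x_\ell]$, and $0$ outside $(x_{j-1},x_{j+1})$). $\mathscr F[u](\xi)=\frac{1}{\sqrt{2\pi}}\int_{\mathbb R}u(x)e^{-\mathrm{i}x\xi}dx$. *)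

theory Defs
  imports "HOL-Analysis.Analysis"
begin

definition hat :: "(nat \<Rightarrow> real) \<Rightarrow> nat \<Rightarrow> real \<Rightarrow> real" where
  "hat x j t =
     (if x (j - 1) \<le> t \<and> t \<le> x j then (t - x (j - 1)) / (x j - x (j - 1))
      else if x j < t \<and> t \<le> x (j + 1) then (x (j + 1) - t) / (x (j + 1) - x j)
      else 0)"

definition fourier :: "(real \<Rightarrow> real) \<Rightarrow> real \<Rightarrow> complex" where
  "fourier u \<xi> = complex_of_real (1 / sqrt (2 * pi)) *
     (LINT t|lborel. complex_of_real (u t) * exp (- \<i> * complex_of_real (t * \<xi>)))"

definition frac_stiff :: "real \<Rightarrow> (nat \<Rightarrow> real) \<Rightarrow> nat \<Rightarrow> nat \<Rightarrow> complex" where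
  "frac_stiff s x j k =
     (LINT \<xi>|lborel. complex_of_real (\<bar>\<xi>\<bar> powr (2 * s)) *
        fourier (hat x j) \<xi> * cnj (fourier (hat x k) \<xi>))"

definition stiff_weight :: "int \<Rightarrow> real" where
  "stiff_weight i = (if i = 0 then 6 else if \<bar>i\<bar> = 1 then -4 else if \<bar>i\<bar> = 2 then 1 else 0)"

definition C_hat :: "real \<Rightarrow> real" where
  "C_hat s = 1 / (2 * Gamma (4 - 2 * s) * cos (s * pi))"

end

theory Submission
  imports Defs
begin

text \<open>
  The hat function at a node \<open>c\<close> of a grid of width \<open>h\<close> is the tent \<open>max 0 (1 - \<bar>t - c\<bar> / h)\<close>,
  whose Fourier transform is \<open>exp (- \<i> c \<xi>) (2 - 2 cos (h \<xi>)) / (sqrt (2 pi) h \<xi>\<^sup>2)\<close>.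
  After the substitution \<open>u = h \<xi>\<close> the entry \<open>S\<^sub>j\<^sub>k\<close> becomes a multiple of
  \<open>\<integral> \<bar>u\<bar>\<^bsup>-\<gamma>\<^esup> (2 - 2 cos u)\<^sup>2 cos (m u) du\<close> with \<open>\<gamma> = 4 - 2 s\<close> and \<open>m = k - j\<close>, and
  \<open>(2 - 2 cos u)\<^sup>2 cos (m u) = \<Sum>\<^sub>i w\<^sub>i cos ((m + i) u)\<close>. Writing
  \<open>u\<^bsup>-\<gamma>\<^esup> = \<integral> t\<^bsup>\<gamma>-1\<^esup> exp (- t u) dt / Gamma \<gamma>\<close> and integrating in \<open>u\<close> first turns every cosine into
  its Laplace transform \<open>t / (t\<^sup>2 + (m + i)\<^sup>2)\<close>. The weights have vanishing moments of order 0
  and 2, so this sum decays like \<open>t\<^bsup>-3\<^esup>\<close> or \<open>t\<^bsup>-5\<^esup>\<close>; splitting it into the Mellin-type integrals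
  \<open>\<integral>\<^sub>0\<^sup>\<infinity> t\<^sup>a / (t\<^sup>2 + c\<^sup>2) dt = \<bar>c\<bar>\<^bsup>a-1\<^esup> pi / (2 cos (pi a / 2))\<close> produces the powers
  \<open>\<bar>m + i\<bar>\<^bsup>3-2s\<^esup>\<close>. The excluded value \<open>s = 1/2\<close> is the zero of \<open>cos (s pi)\<close>.
\<close>

section \<open>Lebesgue integrals on the half line\<close>

lemma set_integral_sum:
  fixes f :: "'i \<Rightarrow> 'a \<Rightarrow> 'b::{banach, second_countable_topology}"
  assumes "\<And>i. i \<in> I \<Longrightarrow> set_integrable M A (f i)"
  shows "(LINT x:A|M. (\<Sum>i\<in>I. f i x)) = (\<Sum>i\<in>I. LINT x:A|M. f i x)"
  unfolding set_lebesgue_integral_def scaleR_sum_right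
  by (rule Bochner_Integration.integral_sum) (use assms in \<open>simp only: set_integrable_def\<close>)

lemma set_integrable_lborel_of_absolutely_integrable:
  fixes f :: "real \<Rightarrow> real"
  assumes "f \<in> borel_measurable borel" and "S \<in> sets borel" and "f absolutely_integrable_on S"
  shows "set_integrable lborel S f"
  using assms unfolding set_integrable_def
  by (subst (asm) integrable_completion) (auto simp: absolutely_integrable_on_def set_integrable_def)

lemma set_integrable_powr_mult_bounded:
  fixes g :: "real \<Rightarrow> real" and \<gamma> C :: real
  assumes \<gamma>: "1 < \<gamma>" "\<gamma> < 5" and g: "g \<in> borel_measurable borel"
    and near_0: "\<And>u. 0 < u \<Longrightarrow> \<bar>g u\<bar> \<le> u ^ 4" and bounded: "\<And>u. \<bar>g u\<bar> \<le> C"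
  shows "set_integrable lborel {0<..} (\<lambda>u. u powr (- \<gamma>) * g u)"
proof -
  have "(\<lambda>u. u powr (4 - \<gamma>)) integrable_on {0<..1}"
    using \<gamma> by (intro integrable_on_powr_from_0') auto
  then have "(\<lambda>u. u powr (4 - \<gamma>)) absolutely_integrable_on {0<..1}"
    by (subst absolutely_integrable_on_iff_nonneg) auto
  then have small: "set_integrable lborel {0<..1} (\<lambda>u. u powr (4 - \<gamma>))"
    by (intro set_integrable_lborel_of_absolutely_integrable) auto
  have "((\<lambda>u. u powr (- \<gamma>)) has_integral - (1 powr (- \<gamma> + 1)) / (- \<gamma> + 1)) {1..}"
    using \<gamma> by (intro has_integral_powr_to_inf) auto
  then have "(\<lambda>u. u powr (- \<gamma>)) absolutely_integrable_on {1..}"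
    by (subst absolutely_integrable_on_iff_nonneg) (auto simp: has_integral_integrable)
  then have large: "set_integrable lborel {1..} (\<lambda>u. u powr (- \<gamma>))"
    by (intro set_integrable_lborel_of_absolutely_integrable) auto
  define B where "B u = indicator {0<..1} u * u powr (4 - \<gamma>) + \<bar>C\<bar> * (indicator {1..} u * u powr (- \<gamma>))"
    for u :: real
  have "integrable lborel B"
    using small large unfolding B_def set_integrable_def
    by (intro Bochner_Integration.integrable_add integrable_mult_right) simp_all
  then show ?thesis
    unfolding set_integrable_def
  proof (rule Bochner_Integration.integrable_bound)
    show "(\<lambda>u. indicator {0<..} u *\<^sub>R (u powr (- \<gamma>) * g u)) \<in> borel_measurable lborel"
      using g by measurable
    show "AE u in lborel. norm (indicator {0<..} u *\<^sub>R (u powr (- \<gamma>) * g u)) \<le> norm (B u)"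
    proof (intro AE_I2)
      fix u :: real
      have "B u \<ge> 0" by (simp add: B_def)
      moreover have "u powr (- \<gamma>) * \<bar>g u\<bar> \<le> B u" if u: "u > 0"
      proof (cases "u \<le> 1")
        case True
        have "u powr (- \<gamma>) * \<bar>g u\<bar> \<le> u powr (- \<gamma>) * u powr 4"
          using near_0[OF u] u by (intro mult_left_mono) (simp_all add: powr_realpow)
        also have "\<dots> = u powr (4 - \<gamma>)"
          by (simp add: powr_add[symmetric])
        finally have "u powr (- \<gamma>) * \<bar>g u\<bar> \<le> u powr (4 - \<gamma>)" .
        moreover have "0 \<le> \<bar>C\<bar> * (indicator {1..} u * u powr (- \<gamma>))" by simp
        moreover have "B u = u powr (4 - \<gamma>) + \<bar>C\<bar> * (indicator {1..} u * u powr (- \<gamma>))"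
          using u True by (simp add: B_def)
        ultimately show ?thesis by linarith
      next
        case False
        have "u powr (- \<gamma>) * \<bar>g u\<bar> \<le> u powr (- \<gamma>) * \<bar>C\<bar>"
          using bounded[of u] by (intro mult_left_mono) auto
        then show ?thesis using False by (simp add: B_def mult.commute)
      qed
      ultimately show "norm (indicator {0<..} u *\<^sub>R (u powr (- \<gamma>) * g u)) \<le> norm (B u)"
        by (auto simp: indicator_def abs_mult)
    qed
  qed
qed

lemma nn_integral_powr_exp_scaled:
  assumes x: "x > 0" and w: "w > (0::real)"
  shows "(\<integral>\<^sup>+t. ennreal (indicator {0<..} t * t powr (x - 1) * exp (- (w * t))) \<partial>lborel)
           = ennreal (Gamma x / w powr x)"
proof -
  have "ennreal (Gamma x) = (\<integral>\<^sup>+ t. ennreal (indicator {0..} t * t powr (x - 1) / exp t) \<partial>lborel)"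
    using Gamma_conv_nn_integral_real[OF x] .
  also have "\<dots> = (\<integral>\<^sup>+ t. ennreal (indicator {0<..} t * t powr (x - 1) / exp t) \<partial>lborel)"
    by (intro nn_integral_cong_AE eventually_mono[OF AE_lborel_singleton[of 0]])
       (auto simp: indicator_def)
  also have "\<dots> = (\<integral>\<^sup>+ t. ennreal (indicator {0<..} (w*t) * (w*t) powr (x - 1) / exp (w*t))
                      \<partial>distr lborel borel ((*) (1/w)))"
    using w by (subst nn_integral_distr) (auto intro!: nn_integral_cong simp: indicator_def)
  also have "distr lborel borel ((*) (1/w)) = density lborel (\<lambda>_. w)"
    using w by (subst lborel_distr_mult) auto
  also have "(\<integral>\<^sup>+ t. ennreal (indicator {0<..} (w*t) * (w*t) powr (x - 1) / exp (w*t)) \<partial>density lborel (\<lambda>_. ennreal w))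
      = (\<integral>\<^sup>+ t. ennreal w * ennreal (indicator {0<..} (w*t) * (w*t) powr (x - 1) / exp (w*t)) \<partial>lborel)"
    by (subst nn_integral_density) auto
  also have "\<dots> = (\<integral>\<^sup>+ t. ennreal (w powr x) *
                      ennreal (indicator {0<..} t * t powr (x - 1) * exp (- (w * t))) \<partial>lborel)"
  proof (intro nn_integral_cong)
    fix t :: real
    show "ennreal w * ennreal (indicator {0<..} (w*t) * (w*t) powr (x - 1) / exp (w*t)) =
          ennreal (w powr x) * ennreal (indicator {0<..} t * t powr (x - 1) * exp (- (w * t)))"
    proof (cases "t > 0")
      case True
      have "w * ((w*t) powr (x - 1) / exp (w*t)) = w powr x * (t powr (x - 1) * exp (- (w * t)))"
        using True w by (simp add: powr_mult powr_diff exp_minus field_simps)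
      then show ?thesis using True w
        by (simp add: ennreal_mult'[symmetric] indicator_def zero_less_mult_iff)
    qed (use w in \<open>simp add: indicator_def zero_less_mult_iff\<close>)
  qed
  also have "\<dots> = ennreal (w powr x) *
      (\<integral>\<^sup>+ t. ennreal (indicator {0<..} t * t powr (x - 1) * exp (- (w * t))) \<partial>lborel)"
    by (subst nn_integral_cmult) auto
  finally have Gamma_eq: "ennreal (Gamma x) = ennreal (w powr x) *
      (\<integral>\<^sup>+ t. ennreal (indicator {0<..} t * t powr (x - 1) * exp (- (w * t))) \<partial>lborel)" .
  have "ennreal (Gamma x / w powr x) = ennreal (Gamma x) / ennreal (w powr x)"
    using w x by (simp add: divide_ennreal less_imp_le)
  also have "\<dots> = (\<integral>\<^sup>+ t. ennreal (indicator {0<..} t * t powr (x - 1) * exp (- (w * t))) \<partial>lborel)"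
    unfolding Gamma_eq using w by (subst mult.commute, subst mult_divide_eq_ennreal) auto
  finally show ?thesis ..
qed

lemma
  assumes "x > 0" and "w > (0::real)"
  shows integrable_powr_exp_scaled:
      "integrable lborel (\<lambda>t. indicator {0<..} t * t powr (x - 1) * exp (- (w * t)))"
    and integral_powr_exp_scaled:
      "(\<integral>t. indicator {0<..} t * t powr (x - 1) * exp (- (w * t)) \<partial>lborel) = Gamma x / w powr x"
  using nn_integral_powr_exp_scaled[OF assms] assms
  by (subst (asm) nn_integral_eq_integrable; force simp: less_imp_le)+

lemma Gamma_reflection_real:
  assumes "0 < p" "p < (1::real)"
  shows "Gamma p * Gamma (1 - p) = pi / sin (pi * p)"
proof -
  have "complex_of_real (Gamma p * Gamma (1 - p)) =
        Gamma (complex_of_real p) * Gamma (1 - complex_of_real p)"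
    by (metis Gamma_complex_of_real of_real_1 of_real_diff of_real_mult)
  also have "\<dots> = of_real pi / sin (of_real pi * of_real p)"
    by (rule Gamma_reflection_complex)
  also have "\<dots> = complex_of_real (pi / sin (pi * p))"
    by (simp add: sin_of_real[symmetric])
  finally show ?thesis by (simp only: of_real_eq_iff)
qed

text \<open>Write \<open>1 / (1 + y)\<close> and \<open>y powr (p - 1)\<close> as Laplace integrals and swap the integrals;
  the result is \<open>Gamma p * Gamma (1 - p)\<close>.\<close>
lemma nn_integral_powr_div_1_plus:
  assumes p: "0 < p" "p < (1::real)"
  shows "(\<integral>\<^sup>+y. ennreal (indicator {0<..} y * y powr (p - 1) / (1 + y)) \<partial>lborel)
          = ennreal (pi / sin (pi * p))"
proof -
  define F where "F y w = ennreal (indicator {0<..} y * indicator {0<..} w * y powr (p - 1) *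
                                   exp (- ((1 + y) * w)))" for y w :: real
  have inner_w: "(\<integral>\<^sup>+w. F y w \<partial>lborel) = ennreal (indicator {0<..} y * y powr (p - 1) / (1 + y))"
    for y
  proof (cases "y > 0")
    case True
    have "(\<integral>\<^sup>+w. F y w \<partial>lborel) = (\<integral>\<^sup>+w. ennreal (y powr (p - 1)) *
             ennreal (indicator {0<..} w * w powr (1 - 1) * exp (- ((1 + y) * w))) \<partial>lborel)"
      using True by (intro nn_integral_cong) (auto simp: F_def indicator_def ennreal_mult'[symmetric])
    also have "\<dots> = ennreal (y powr (p - 1)) * ennreal (Gamma 1 / (1 + y) powr 1)"
      using True nn_integral_powr_exp_scaled[of 1 "1 + y"] by (subst nn_integral_cmult) auto
    finally show ?thesis
      using True by (simp add: ennreal_mult'[symmetric])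
  qed (auto simp: F_def indicator_def)
  have inner_y: "(\<integral>\<^sup>+y. F y w \<partial>lborel) =
      ennreal (Gamma p) * ennreal (indicator {0<..} w * w powr ((1 - p) - 1) * exp (- (1 * w)))" for w
  proof (cases "w > 0")
    case True
    have "(\<integral>\<^sup>+y. F y w \<partial>lborel) = (\<integral>\<^sup>+y. ennreal (exp (- w)) *
             ennreal (indicator {0<..} y * y powr (p - 1) * exp (- (w * y))) \<partial>lborel)"
      using True
      by (intro nn_integral_cong)
         (auto simp: F_def indicator_def ennreal_mult'[symmetric] algebra_simps exp_diff exp_minus
                     divide_inverse)
    also have "\<dots> = ennreal (exp (- w)) * ennreal (Gamma p / w powr p)"
      using True p by (subst nn_integral_cmult) (auto simp: nn_integral_powr_exp_scaled)
    finally show ?thesis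
      using True p
      by (simp add: ennreal_mult'[symmetric] less_imp_le powr_minus powr_diff divide_simps)
  qed (auto simp: F_def indicator_def)
  have "(\<integral>\<^sup>+y. ennreal (indicator {0<..} y * y powr (p - 1) / (1 + y)) \<partial>lborel)
      = (\<integral>\<^sup>+y. \<integral>\<^sup>+w. F y w \<partial>lborel \<partial>lborel)"
    by (simp add: inner_w)
  also have "\<dots> = (\<integral>\<^sup>+w. \<integral>\<^sup>+y. F y w \<partial>lborel \<partial>lborel)"
    unfolding F_def by (subst lborel_pair.Fubini') (auto simp: case_prod_unfold)
  also have "\<dots> = ennreal (Gamma p) * ennreal (Gamma (1 - p) / 1 powr (1 - p))"
    unfolding inner_y using p nn_integral_powr_exp_scaled[of "1 - p" 1]
    by (subst nn_integral_cmult) auto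
  also have "\<dots> = ennreal (pi / sin (pi * p))"
    using p by (simp add: ennreal_mult'[symmetric] less_imp_le Gamma_reflection_real)
  finally show ?thesis .
qed

lemma has_integral_powr_div_1_plus:
  assumes "0 < p" "p < (1::real)"
  shows "((\<lambda>y. y powr (p - 1) / (1 + y)) has_integral (pi / sin (pi * p))) {0<..}"
proof -
  have "sin (pi * p) > 0" using assms by (intro sin_gt_zero) auto
  then have "((\<lambda>y. indicator {0<..} y * y powr (p - 1) / (1 + y)) has_integral (pi / sin (pi * p))) UNIV"
    using nn_integral_powr_div_1_plus[OF assms]
    by (intro nn_integral_has_integral) (auto simp: indicator_def)
  also have "(\<lambda>y. indicator {0<..} y * y powr (p - 1) / (1 + y)) =
             (\<lambda>y. if y \<in> {0<..} then y powr (p - 1) / (1 + y) else 0)"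
    by (auto simp: indicator_def)
  finally show ?thesis
    by (simp only: has_integral_restrict_UNIV)
qed

text \<open>Substitute \<open>t = c * sqrt y\<close>.\<close>
lemma powr_div_sq_plus_sq_integral:
  assumes a: "-1 < a" "a < (1::real)" and c: "c > 0"
  shows "(\<lambda>t. t powr a / (t\<^sup>2 + c\<^sup>2)) absolutely_integrable_on {0<..} \<and>
         integral {0<..} (\<lambda>t. t powr a / (t\<^sup>2 + c\<^sup>2)) = c powr (a - 1) * pi / (2 * cos (pi * a / 2))"
proof -
  define p where "p = (a + 1) / 2"
  have p: "0 < p" "p < 1" using a by (auto simp: p_def)
  define K where "K = c powr (a - 1) / 2"
  define g where "g y = c * sqrt y" for y :: real
  define g' where "g' y = c / (2 * sqrt y)" for y :: real
  have der: "(g has_field_derivative g' y) (at y within {0<..})" if "y \<in> {0<..}" for y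
    unfolding g_def g'_def using that by (auto intro!: derivative_eq_intros simp: field_simps)
  have inj: "inj_on g {0<..}" unfolding g_def using c by (auto simp: inj_on_def)
  have img: "g ` {0<..} = {0<..}"
  proof
    show "g ` {0<..} \<subseteq> {0<..}" using c by (auto simp: g_def)
    show "{0<..} \<subseteq> g ` {0<..}"
    proof
      fix t :: real assume "t \<in> {0<..}"
      then have "t = g ((t / c)\<^sup>2)" "(t / c)\<^sup>2 \<in> {0<..}" using c by (auto simp: g_def real_sqrt_divide)
      then show "t \<in> g ` {0<..}" by blast
    qed
  qed
  have substituted: "\<bar>g' y\<bar> * ((g y) powr a / ((g y)\<^sup>2 + c\<^sup>2)) = K * (y powr (p - 1) / (1 + y))"
    if "y \<in> {0<..}" for y
  proof -
    from that have y: "y > 0" by auto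
    have A1: "(g y) powr a = c powr a * y powr (a / 2)"
      using y c by (simp add: g_def powr_mult powr_half_sqrt[symmetric] powr_powr)
    have A2: "(g y)\<^sup>2 + c\<^sup>2 = c\<^sup>2 * (1 + y)"
      using y by (simp add: g_def algebra_simps)
    have A3: "\<bar>g' y\<bar> = c / 2 * y powr (- 1/2)"
      using y c by (simp add: g'_def powr_minus powr_half_sqrt divide_simps)
    have A4: "y powr (p - 1) = y powr (a / 2) * y powr (- 1/2)"
      using y by (simp add: p_def powr_add[symmetric] field_simps)
    have A5: "c powr (a - 1) = c powr a / c"
      using c by (simp add: powr_diff)
    have "\<bar>g' y\<bar> * ((g y) powr a / ((g y)\<^sup>2 + c\<^sup>2))
        = (c / 2 * y powr (- 1/2)) * (c powr a * y powr (a / 2) / (c\<^sup>2 * (1 + y)))"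
      by (simp only: A1 A2 A3)
    also have "\<dots> = (c powr a / c) / 2 * (y powr (a / 2) * y powr (- 1/2) / (1 + y))"
      using y c by (simp add: divide_simps power2_eq_square)
    finally show ?thesis by (simp add: K_def A4 A5)
  qed
  have "((\<lambda>y. K * (y powr (p - 1) / (1 + y))) has_integral (K * (pi / sin (pi * p)))) {0<..}"
    by (intro has_integral_mult_right has_integral_powr_div_1_plus p)
  then have I: "((\<lambda>y. \<bar>g' y\<bar> * ((g y) powr a / ((g y)\<^sup>2 + c\<^sup>2))) has_integral (K * (pi / sin (pi * p)))) {0<..}"
    by (rule has_integral_spike_eq[where S = "{}", THEN iffD2, rotated 2]) (use substituted in auto)
  then have "(\<lambda>y. \<bar>g' y\<bar> * ((g y) powr a / ((g y)\<^sup>2 + c\<^sup>2))) absolutely_integrable_on {0<..}"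
    by (subst absolutely_integrable_on_iff_nonneg) (auto simp: has_integral_integrable g_def g'_def)
  then have "(\<lambda>t. t powr a / (t\<^sup>2 + c\<^sup>2)) absolutely_integrable_on (g ` {0<..}) \<and>
        integral (g ` {0<..}) (\<lambda>t. t powr a / (t\<^sup>2 + c\<^sup>2)) = K * (pi / sin (pi * p))"
    using has_absolute_integral_change_of_variables_1'[where S="{0<..}" and g=g and g'=g'
        and f="\<lambda>t. t powr a / (t\<^sup>2 + c\<^sup>2)" and b = "K * (pi / sin (pi * p))"]
    using I der inj by (auto simp: integral_unique)
  moreover have "sin (pi * p) = cos (pi * a / 2)"
    by (simp add: p_def field_simps sin_cos_eq)
  ultimately show ?thesis unfolding img by (simp add: K_def)
qed

lemma neg_sq_power_eq_powr:
  fixes c :: real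
  assumes "c \<noteq> 0"
  shows "(- c\<^sup>2) ^ n = (-1) ^ n * \<bar>c\<bar> powr (2 * real n)"
proof -
  have "(- c\<^sup>2) ^ n = (-1) ^ n * (c\<^sup>2) ^ n" by (metis mult_minus1 power_mult_distrib)
  also have "(c\<^sup>2) ^ n = \<bar>c\<bar> ^ (2 * n)" by (simp add: power_mult)
  finally show ?thesis using assms powr_realpow[of "\<bar>c\<bar>" "2 * n"] by simp
qed

lemma cos_half_pi_diff_even: "cos (pi * (\<gamma> - 2 * real n) / 2) = (-1) ^ n * cos (pi * \<gamma> / 2)"
proof -
  have shift: "pi * (\<gamma> - 2 * real n) / 2 = pi * \<gamma> / 2 - real n * pi" by (simp add: field_simps)
  show ?thesis unfolding shift cos_diff cos_npi sin_npi by simp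
qed

text \<open>The factor \<open>(- c\<^sup>2) ^ n\<close> compensates the sign of \<open>cos (pi * (\<gamma> - 2 * n) / 2)\<close>
  and makes the formula hold for \<open>c = 0\<close> as well.\<close>
lemma
  fixes \<gamma> c :: real
  assumes n: "n \<ge> 1" and \<gamma>: "2 * real n - 1 < \<gamma>" "\<gamma> < 2 * real n + 1"
  shows set_integrable_moment_term:
      "set_integrable lborel {0<..} (\<lambda>t. (- c\<^sup>2) ^ n * (t powr (\<gamma> - 2 * real n) / (t\<^sup>2 + c\<^sup>2)))"
    and set_integral_moment_term:
      "(LINT t:{0<..}|lborel. (- c\<^sup>2) ^ n * (t powr (\<gamma> - 2 * real n) / (t\<^sup>2 + c\<^sup>2)))
         = \<bar>c\<bar> powr (\<gamma> - 1) * pi / (2 * cos (pi * \<gamma> / 2))"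
proof -
  define a where "a = \<gamma> - 2 * real n"
  have a: "-1 < a" "a < 1" using \<gamma> by (auto simp: a_def)
  have "set_integrable lborel {0<..} (\<lambda>t. (- c\<^sup>2) ^ n * (t powr a / (t\<^sup>2 + c\<^sup>2))) \<and>
        (LINT t:{0<..}|lborel. (- c\<^sup>2) ^ n * (t powr a / (t\<^sup>2 + c\<^sup>2)))
          = \<bar>c\<bar> powr (\<gamma> - 1) * pi / (2 * cos (pi * \<gamma> / 2))"
  proof (cases "c = 0")
    case True
    then show ?thesis using n by (simp add: power_0_left set_integrable_def)
  next
    case False
    then have c: "\<bar>c\<bar> > 0" by simp
    note HK = powr_div_sq_plus_sq_integral[OF a c, unfolded power2_abs]
    have L: "set_integrable lborel {0<..} (\<lambda>t. t powr a / (t\<^sup>2 + c\<^sup>2))"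
      using HK by (intro set_integrable_lborel_of_absolutely_integrable) auto
    have "\<bar>c\<bar> powr (2 * real n) * \<bar>c\<bar> powr (a - 1) = \<bar>c\<bar> powr (2 * real n + (a - 1))"
      by (rule powr_add[symmetric])
    then have "(- c\<^sup>2) ^ n * (\<bar>c\<bar> powr (a - 1) * pi / (2 * cos (pi * a / 2)))
        = \<bar>c\<bar> powr (\<gamma> - 1) * pi / (2 * cos (pi * \<gamma> / 2))"
      unfolding neg_sq_power_eq_powr[OF False] a_def cos_half_pi_diff_even
      by (simp add: field_simps)
    then show ?thesis
      using L HK set_borel_integral_eq_integral(2)[OF L]
      by (simp only: set_integrable_mult_right set_integral_mult_right)
  qed
  then show "set_integrable lborel {0<..} (\<lambda>t. (- c\<^sup>2) ^ n * (t powr (\<gamma> - 2 * real n) / (t\<^sup>2 + c\<^sup>2)))"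
    and "(LINT t:{0<..}|lborel. (- c\<^sup>2) ^ n * (t powr (\<gamma> - 2 * real n) / (t\<^sup>2 + c\<^sup>2)))
         = \<bar>c\<bar> powr (\<gamma> - 1) * pi / (2 * cos (pi * \<gamma> / 2))"
    by (simp_all add: a_def)
qed

section \<open>Laplace transform of the cosine\<close>

lemma
  fixes t c :: real
  assumes t: "t > 0"
  shows set_integrable_exp_mult_cos: "set_integrable lborel {0<..} (\<lambda>u. exp (- (t * u)) * cos (c * u))"
    and set_integral_exp_mult_cos: "(LINT u:{0<..}|lborel. exp (- (t * u)) * cos (c * u)) = t / (t\<^sup>2 + c\<^sup>2)"
proof -
  have "set_integrable lborel {0<..} (\<lambda>u. exp (- (t * u)))"
    using integrable_powr_exp_scaled[OF zero_less_one t] unfolding set_integrable_def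
    by (rule Bochner_Integration.integrable_cong[THEN iffD1, OF refl, rotated])
       (simp_all add: indicator_def)
  then show I: "set_integrable lborel {0<..} (\<lambda>u. exp (- (t * u)) * cos (c * u))"
    unfolding set_integrable_def
    by (rule Bochner_Integration.integrable_bound)
       (auto simp: indicator_def abs_mult intro!: mult_left_le)
  have tc: "t\<^sup>2 + c\<^sup>2 > 0" using t by (simp add: add_pos_nonneg)
  let ?F = "\<lambda>u. exp (- (t * u)) * (c * sin (c * u) - t * cos (c * u)) / (t\<^sup>2 + c\<^sup>2)"
  have "(LBINT u=ereal 0..\<infinity>. exp (- (t * u)) * cos (c * u)) = 0 - (- t / (t\<^sup>2 + c\<^sup>2))"
  proof (rule interval_integral_FTC_integrable)
    show "(?F has_vector_derivative exp (- (t * x)) * cos (c * x)) (at x)" for x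
    proof -
      have "(cos (c * x) * c * c + sin (c * x) * c * t) * exp (- (t * x)) -
            exp (- (t * x)) * t * (c * sin (c * x) - t * cos (c * x))
          = (exp (- (t * x)) * cos (c * x)) * (t\<^sup>2 + c\<^sup>2)"
        by (simp add: algebra_simps power2_eq_square)
      then show ?thesis
        using tc by (auto intro!: derivative_eq_intros
                          simp: has_real_derivative_iff_has_vector_derivative[symmetric])
    qed
    show "set_integrable lborel (einterval (ereal 0) \<infinity>) (\<lambda>u. exp (- (t * u)) * cos (c * u))"
      using I by (simp add: einterval_def greaterThan_def)
    show "((?F \<circ> real_of_ereal) \<longlongrightarrow> - t / (t\<^sup>2 + c\<^sup>2)) (at_right (ereal 0))"
      using t by (auto simp: ereal_tendsto_simps intro!: tendsto_eq_intros)
    have decay: "((\<lambda>u. exp (- (t * u)) * (\<bar>c\<bar> + t) / (t\<^sup>2 + c\<^sup>2)) \<longlongrightarrow> 0) at_top"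
    proof -
      have "((\<lambda>u. exp (- (t * u))) \<longlongrightarrow> 0) at_top"
        using t by (auto intro!: exp_at_bot[THEN filterlim_compose] filterlim_tendsto_pos_mult_at_top
                                 filterlim_ident simp: filterlim_uminus_at_bot)
      then show ?thesis by (intro tendsto_divide_zero tendsto_mult_left_zero)
    qed
    have "(?F \<longlongrightarrow> 0) at_top"
    proof (rule Lim_null_comparison[OF always_eventually decay], intro allI)
      fix x :: real
      have "\<bar>c * sin (c * x)\<bar> \<le> \<bar>c\<bar>" "\<bar>t * cos (c * x)\<bar> \<le> t"
        using t by (simp_all add: abs_mult mult_left_le)
      then have "\<bar>c * sin (c * x) - t * cos (c * x)\<bar> \<le> \<bar>c\<bar> + t" by linarith
      then show "norm (?F x) \<le> exp (- (t * x)) * (\<bar>c\<bar> + t) / (t\<^sup>2 + c\<^sup>2)"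
        using tc by (simp add: abs_mult divide_right_mono mult_left_mono)
    qed
    then show "((?F \<circ> real_of_ereal) \<longlongrightarrow> 0) (at_left \<infinity>)"
      unfolding ereal_tendsto_simps by simp
  qed (simp, intro continuous_intros)
  then show "(LINT u:{0<..}|lborel. exp (- (t * u)) * cos (c * u)) = t / (t\<^sup>2 + c\<^sup>2)"
    by (simp add: interval_integral_to_infinity_eq)
qed

lemma set_integral_exp_mult_cos_sum:
  fixes w c :: "'i \<Rightarrow> real"
  assumes "t > 0"
  shows "(LINT u:{0<..}|lborel. exp (- (t * u)) * (\<Sum>i\<in>I. w i * cos (c i * u)))
           = (\<Sum>i\<in>I. w i * (t / (t\<^sup>2 + (c i)\<^sup>2)))"
proof -
  have "(LINT u:{0<..}|lborel. exp (- (t * u)) * (\<Sum>i\<in>I. w i * cos (c i * u)))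
      = (LINT u:{0<..}|lborel. (\<Sum>i\<in>I. w i * (exp (- (t * u)) * cos (c i * u))))"
    by (simp add: sum_distrib_left mult_ac)
  also have "\<dots> = (\<Sum>i\<in>I. w i * (LINT u:{0<..}|lborel. exp (- (t * u)) * cos (c i * u)))"
    using assms by (simp add: set_integral_sum set_integrable_exp_mult_cos)
  finally show ?thesis
    using assms by (simp add: set_integral_exp_mult_cos)
qed

text \<open>Subordination: \<open>Gamma \<gamma> * u powr - \<gamma>\<close> is the integral of \<open>t powr (\<gamma> - 1) * exp (- t * u)\<close>
  over \<open>t > 0\<close>; swapping the order of integration turns each \<open>cos (c * u)\<close> into its
  Laplace transform \<open>t / (t\<^sup>2 + c\<^sup>2)\<close>.\<close>
lemma Gamma_mult_set_integral_powr_cos_sum: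
  fixes w c :: "'i \<Rightarrow> real" and \<gamma> :: real
  assumes \<gamma>: "\<gamma> > 0"
    and int: "set_integrable lborel {0<..} (\<lambda>u. u powr (- \<gamma>) * (\<Sum>i\<in>I. w i * cos (c i * u)))"
  shows "Gamma \<gamma> * (LINT u:{0<..}|lborel. u powr (- \<gamma>) * (\<Sum>i\<in>I. w i * cos (c i * u))) =
         (LINT t:{0<..}|lborel. t powr (\<gamma> - 1) * (\<Sum>i\<in>I. w i * (t / (t\<^sup>2 + (c i)\<^sup>2))))"
proof -
  define G where "G u = (\<Sum>i\<in>I. w i * cos (c i * u))" for u
  define F where "F u t = indicator {0<..} u * indicator {0<..} t * (t powr (\<gamma> - 1) * exp (- (t * u)))"
    for u t :: real
  have [measurable]: "G \<in> borel_measurable borel" unfolding G_def by measurable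
  have F_nonneg: "F u t \<ge> 0" for u t by (simp add: F_def)
  have inner_t: "(\<integral>t. F u t * K \<partial>lborel) = indicator {0<..} u * K * (Gamma \<gamma> * u powr (- \<gamma>))"
    and integrable_inner_t: "integrable lborel (\<lambda>t. F u t * K)" for u K
  proof -
    have "(\<lambda>t. F u t * K) = (\<lambda>t. indicator {0<..} u * K *
            (indicator {0<..} t * t powr (\<gamma> - 1) * exp (- (u * t))))"
      by (auto simp: F_def mult_ac)
    then show "(\<integral>t. F u t * K \<partial>lborel) = indicator {0<..} u * K * (Gamma \<gamma> * u powr (- \<gamma>))"
      and "integrable lborel (\<lambda>t. F u t * K)"
      using \<gamma> by (cases "u > 0"; simp add: integral_powr_exp_scaled integrable_powr_exp_scaled
                                         powr_minus divide_inverse)+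
  qed
  have integrable_F: "integrable (lborel \<Otimes>\<^sub>M lborel) (\<lambda>(u, t). F u t * G u)"
  proof (rule lborel_pair.Fubini_integrable)
    show "(\<lambda>(u, t). F u t * G u) \<in> borel_measurable (lborel \<Otimes>\<^sub>M lborel)"
      unfolding F_def by measurable
    have "(\<lambda>u. \<integral>t. norm (F u t * G u) \<partial>lborel) = (\<lambda>u. \<integral>t. F u t * \<bar>G u\<bar> \<partial>lborel)"
      using F_nonneg by (intro ext Bochner_Integration.integral_cong) (simp_all add: abs_mult)
    also have "\<dots> = (\<lambda>u. Gamma \<gamma> * norm (indicator {0<..} u *\<^sub>R (u powr (- \<gamma>) * G u)))"
      unfolding inner_t by (simp add: abs_mult indicator_def mult_ac)
    finally have "(\<lambda>u. \<integral>t. norm (F u t * G u) \<partial>lborel) =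
          (\<lambda>u. Gamma \<gamma> * norm (indicator {0<..} u *\<^sub>R (u powr (- \<gamma>) * G u)))" .
    moreover have "integrable lborel (\<lambda>u. indicator {0<..} u *\<^sub>R (u powr (- \<gamma>) * G u))"
      using int unfolding set_integrable_def G_def .
    ultimately show "integrable lborel (\<lambda>u. \<integral>t. norm (case_prod (\<lambda>u t. F u t * G u) (u, t)) \<partial>lborel)"
      by simp
  qed (use integrable_inner_t[where K = 1] in simp)
  have "Gamma \<gamma> * (LINT u:{0<..}|lborel. u powr (- \<gamma>) * G u) = (\<integral>u. \<integral>t. F u t * G u \<partial>lborel \<partial>lborel)"
    unfolding inner_t set_lebesgue_integral_def integral_mult_right_zero[symmetric]
    by (rule Bochner_Integration.integral_cong) (simp_all add: indicator_def)
  also have "\<dots> = (\<integral>t. \<integral>u. F u t * G u \<partial>lborel \<partial>lborel)"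
    using lborel_pair.Fubini_integral[OF integrable_F] by simp
  also have "\<dots> = (LINT t:{0<..}|lborel. t powr (\<gamma> - 1) * (\<Sum>i\<in>I. w i * (t / (t\<^sup>2 + (c i)\<^sup>2))))"
    unfolding set_lebesgue_integral_def
  proof (intro Bochner_Integration.integral_cong refl)
    fix t :: real
    have "(\<integral>u. F u t * G u \<partial>lborel) = (\<integral>u. indicator {0<..} t * t powr (\<gamma> - 1) *
            (indicator {0<..} u *\<^sub>R (exp (- (t * u)) * G u)) \<partial>lborel)"
      by (rule Bochner_Integration.integral_cong) (simp_all add: F_def)
    also have "\<dots> = indicator {0<..} t * t powr (\<gamma> - 1) * (LINT u:{0<..}|lborel. exp (- (t * u)) * G u)"
      by (simp only: integral_mult_right_zero set_lebesgue_integral_def)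
    finally have "(\<integral>u. F u t * G u \<partial>lborel) = indicator {0<..} t * t powr (\<gamma> - 1) *
        (LINT u:{0<..}|lborel. exp (- (t * u)) * G u)" .
    then show "(\<integral>u. F u t * G u \<partial>lborel) =
        indicator {0<..} t *\<^sub>R (t powr (\<gamma> - 1) * (\<Sum>i\<in>I. w i * (t / (t\<^sup>2 + (c i)\<^sup>2))))"
      by (cases "t > 0") (simp_all add: G_def set_integral_exp_mult_cos_sum)
  qed
  finally show ?thesis unfolding G_def .
qed

section \<open>Rational integrals with vanishing moments\<close>

lemma div_sq_plus_sq_expansion_step:
  fixes t c P :: real
  assumes "t > 0" and "P > 0"
  shows "t / (P * (t\<^sup>2 + c\<^sup>2)) = 1 / (P * t) - c\<^sup>2 * (t / (P * t\<^sup>2 * (t\<^sup>2 + c\<^sup>2)))"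
proof -
  define D where "D = t\<^sup>2 + c\<^sup>2"
  have "D > 0" using assms by (simp add: D_def add_pos_nonneg)
  moreover have "c\<^sup>2 = D - t\<^sup>2" by (simp add: D_def)
  ultimately show ?thesis
    using assms unfolding D_def[symmetric] by (simp add: field_simps power2_eq_square)
qed

lemma div_sq_plus_sq_expansion:
  fixes t c :: real
  assumes "t > 0"
  shows "t / (t\<^sup>2 + c\<^sup>2) = (\<Sum>k<n. (- c\<^sup>2) ^ k / t ^ (2 * k + 1)) +
           (- c\<^sup>2) ^ n * (t / (t ^ (2 * n) * (t\<^sup>2 + c\<^sup>2)))"
proof -
  define X where "X m = t / (t ^ (2 * m) * (t\<^sup>2 + c\<^sup>2))" for m
  have step: "X m = 1 / t ^ (2 * m + 1) - c\<^sup>2 * X (Suc m)" for m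
  proof -
    have "t ^ (2 * Suc m) = t ^ (2 * m) * t\<^sup>2" "t ^ (2 * m + 1) = t ^ (2 * m) * t"
      by (simp_all add: power_add power2_eq_square)
    then show ?thesis
      unfolding X_def using assms by (simp only:) (intro div_sq_plus_sq_expansion_step; simp)
  qed
  have "t / (t\<^sup>2 + c\<^sup>2) = (\<Sum>k<n. (- c\<^sup>2) ^ k / t ^ (2 * k + 1)) + (- c\<^sup>2) ^ n * X n"
  proof (induction n)
    case 0
    show ?case by (simp add: X_def)
  next
    case (Suc n)
    have "(\<Sum>k<Suc n. (- c\<^sup>2) ^ k / t ^ (2 * k + 1)) + (- c\<^sup>2) ^ Suc n * X (Suc n)
        = (\<Sum>k<n. (- c\<^sup>2) ^ k / t ^ (2 * k + 1)) + (- c\<^sup>2) ^ n * X n"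
      unfolding step[of n] by (simp add: algebra_simps)
    with Suc.IH show ?case by simp
  qed
  then show ?thesis unfolding X_def .
qed

text \<open>If the moments \<open>\<Sum>i. w i * (c i)\<^sup>2 ^ k\<close> vanish for \<open>k < n\<close>, the leading terms of the
  expansion cancel and the sum decays like \<open>t ^ (- 2 * n - 1)\<close>.\<close>
lemma sum_div_sq_plus_sq_vanishing_moments:
  fixes w c :: "'i \<Rightarrow> real" and t :: real
  assumes t: "t > 0" and moments: "\<forall>k<n. (\<Sum>i\<in>I. w i * ((c i)\<^sup>2) ^ k) = 0"
  shows "(\<Sum>i\<in>I. w i * (t / (t\<^sup>2 + (c i)\<^sup>2))) =
         (\<Sum>i\<in>I. w i * ((- (c i)\<^sup>2) ^ n * (t / (t ^ (2 * n) * (t\<^sup>2 + (c i)\<^sup>2)))))"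
proof -
  have expansion: "(\<Sum>i\<in>I. w i * (t / (t\<^sup>2 + (c i)\<^sup>2))) =
        (\<Sum>i\<in>I. w i * (\<Sum>k<n. (- (c i)\<^sup>2) ^ k / t ^ (2 * k + 1))) +
        (\<Sum>i\<in>I. w i * ((- (c i)\<^sup>2) ^ n * (t / (t ^ (2 * n) * (t\<^sup>2 + (c i)\<^sup>2)))))"
    by (simp only: div_sq_plus_sq_expansion[OF t, of _ n] distrib_left sum.distrib)
  have neg: "(- (c i)\<^sup>2) ^ k = (-1) ^ k * ((c i)\<^sup>2) ^ k" for i k
    by (rule power_minus)
  have "(\<Sum>i\<in>I. w i * (\<Sum>k<n. (- (c i)\<^sup>2) ^ k / t ^ (2 * k + 1)))
      = (\<Sum>k<n. (-1) ^ k / t ^ (2 * k + 1) * (\<Sum>i\<in>I. w i * ((c i)\<^sup>2) ^ k))"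
    unfolding neg sum_distrib_left by (subst sum.swap) (simp add: mult_ac)
  also have "\<dots> = 0"
    by (simp add: moments)
  finally have leading_terms: "(\<Sum>i\<in>I. w i * (\<Sum>k<n. (- (c i)\<^sup>2) ^ k / t ^ (2 * k + 1))) = 0" .
  show ?thesis
    by (simp only: expansion leading_terms add_0_left)
qed

lemma set_integral_powr_sum_div_sq_plus_sq:
  fixes w c :: "'i \<Rightarrow> real" and \<gamma> :: real
  assumes n: "n \<ge> 1" and \<gamma>: "2 * real n - 1 < \<gamma>" "\<gamma> < 2 * real n + 1"
    and moments: "\<forall>k<n. (\<Sum>i\<in>I. w i * ((c i)\<^sup>2) ^ k) = 0"
  shows "(LINT t:{0<..}|lborel. t powr (\<gamma> - 1) * (\<Sum>i\<in>I. w i * (t / (t\<^sup>2 + (c i)\<^sup>2))))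
           = (\<Sum>i\<in>I. w i * \<bar>c i\<bar> powr (\<gamma> - 1)) * pi / (2 * cos (pi * \<gamma> / 2))"
proof -
  have pointwise: "t powr (\<gamma> - 1) * (\<Sum>i\<in>I. w i * (t / (t\<^sup>2 + (c i)\<^sup>2)))
      = (\<Sum>i\<in>I. w i * ((- (c i)\<^sup>2) ^ n * (t powr (\<gamma> - 2 * real n) / (t\<^sup>2 + (c i)\<^sup>2))))"
    if "t \<in> {0<..}" for t
  proof -
    from that have t: "t > 0" by simp
    have "t powr (\<gamma> - 1) * t / t ^ (2 * n) = t powr (\<gamma> - 2 * real n)"
      using t by (simp add: powr_diff powr_add powr_realpow[symmetric])
    then have "t powr (\<gamma> - 1) * (t / (t ^ (2 * n) * D)) = t powr (\<gamma> - 2 * real n) / D" for D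
      by (metis divide_divide_eq_left times_divide_eq_right)
    then have key: "t powr (\<gamma> - 1) * (a * (b * (t / (t ^ (2 * n) * D)))) =
               a * (b * (t powr (\<gamma> - 2 * real n) / D))" for a b D
      by (metis mult.left_commute)
    have "t powr (\<gamma> - 1) * (\<Sum>i\<in>I. w i * (t / (t\<^sup>2 + (c i)\<^sup>2))) =
          (\<Sum>i\<in>I. t powr (\<gamma> - 1) *
             (w i * ((- (c i)\<^sup>2) ^ n * (t / (t ^ (2 * n) * (t\<^sup>2 + (c i)\<^sup>2))))))"
      by (subst sum_div_sq_plus_sq_vanishing_moments[OF t moments]) (rule sum_distrib_left)
    then show ?thesis
      by (simp only: key)
  qed
  have "(LINT t:{0<..}|lborel. t powr (\<gamma> - 1) * (\<Sum>i\<in>I. w i * (t / (t\<^sup>2 + (c i)\<^sup>2))))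
      = (LINT t:{0<..}|lborel. (\<Sum>i\<in>I. w i * ((- (c i)\<^sup>2) ^ n *
                                   (t powr (\<gamma> - 2 * real n) / (t\<^sup>2 + (c i)\<^sup>2)))))"
    using pointwise by (intro set_lebesgue_integral_cong) (simp, blast)
  also have "\<dots> = (\<Sum>i\<in>I. LINT t:{0<..}|lborel. w i * ((- (c i)\<^sup>2) ^ n *
                                   (t powr (\<gamma> - 2 * real n) / (t\<^sup>2 + (c i)\<^sup>2))))"
    by (intro set_integral_sum set_integrable_mult_right set_integrable_moment_term n \<gamma>)
  also have "\<dots> = (\<Sum>i\<in>I. w i * (\<bar>c i\<bar> powr (\<gamma> - 1) * pi / (2 * cos (pi * \<gamma> / 2))))"
    by (intro sum.cong refl trans[OF set_integral_mult_right])
       (simp only: set_integral_moment_term[OF n \<gamma>])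
  finally show ?thesis
    by (simp add: sum_divide_distrib sum_distrib_right mult.assoc)
qed

section \<open>The stiffness weights\<close>

lemma two_minus_two_cos_bounds:
  fixes u :: real
  shows "0 \<le> 2 - 2 * cos u" and "2 - 2 * cos u \<le> u\<^sup>2" and "2 - 2 * cos u \<le> 4"
proof -
  have "2 - 2 * cos u = 4 * (sin (u / 2))\<^sup>2"
    using cos_double_sin[of "u / 2"] by simp
  moreover have "(sin (u / 2))\<^sup>2 \<le> (u / 2)\<^sup>2"
    using abs_sin_x_le_abs_x[of "u / 2"] by (metis abs_ge_zero power2_abs power_mono)
  ultimately show "2 - 2 * cos u \<le> u\<^sup>2" by (simp add: power_divide)
  show "0 \<le> 2 - 2 * cos u" "2 - 2 * cos u \<le> 4"
    using cos_le_one[of u] cos_ge_minus_one[of u] by linarith+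
qed

lemma sum_int_minus2_2: "(\<Sum>i\<in>{-2..2::int}. f i) = f (-2) + f (-1) + f 0 + f 1 + f 2"
proof -
  have "{-2..2::int} = {-2, -1, 0, 1, 2}" by auto
  then show ?thesis by (simp add: algebra_simps)
qed

lemma stiff_weight_simps:
  "stiff_weight (-2) = 1" "stiff_weight (-1) = -4" "stiff_weight 0 = 6"
  "stiff_weight 1 = -4" "stiff_weight 2 = 1"
  by (simp_all add: stiff_weight_def)

lemma stiff_weight_moments:
  fixes m :: real
  assumes "k < 2"
  shows "(\<Sum>i\<in>{-2..2::int}. stiff_weight i * ((m + real_of_int i)\<^sup>2) ^ k) = 0"
  using assms less_2_cases[of k]
  by (auto simp: sum_int_minus2_2 stiff_weight_simps power2_eq_square algebra_simps)

text \<open>The weights are the coefficients of \<open>(2 - 2 * cos u)\<^sup>2 = (e\<^sup>i\<^sup>u - 2 + e\<^sup>-\<^sup>i\<^sup>u)\<^sup>2\<close>.\<close>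
lemma sum_stiff_weight_cos:
  fixes m u :: real
  shows "(\<Sum>i\<in>{-2..2::int}. stiff_weight i * cos ((m + real_of_int i) * u)) =
         (2 - 2 * cos u)\<^sup>2 * cos (m * u)"
proof -
  have e2: "cos ((m + real_of_int (-2)) * u) = cos (m * u) * cos (2 * u) + sin (m * u) * sin (2 * u)"
    using cos_diff[of "m * u" "2 * u"] by (simp add: algebra_simps)
  have e1: "cos ((m + real_of_int (-1)) * u) = cos (m * u) * cos u + sin (m * u) * sin u"
    using cos_diff[of "m * u" u] by (simp add: algebra_simps)
  have f1: "cos ((m + real_of_int 1) * u) = cos (m * u) * cos u - sin (m * u) * sin u"
    using cos_add[of "m * u" u] by (simp add: algebra_simps)
  have f2: "cos ((m + real_of_int 2) * u) = cos (m * u) * cos (2 * u) - sin (m * u) * sin (2 * u)"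
    using cos_add[of "m * u" "2 * u"] by (simp add: algebra_simps)
  have double: "cos (2 * u) = 2 * (cos u)\<^sup>2 - 1"
    by (simp add: cos_double_cos)
  show ?thesis
    unfolding sum_int_minus2_2 stiff_weight_simps e2 e1 f1 f2 double
    by (simp add: power2_eq_square algebra_simps)
qed

lemma set_integrable_powr_stiff_cos:
  fixes \<gamma> m :: real
  assumes "1 < \<gamma>" and "\<gamma> < 5"
  shows "set_integrable lborel {0<..} (\<lambda>u. u powr (- \<gamma>) * ((2 - 2 * cos u)\<^sup>2 * cos (m * u)))"
proof (rule set_integrable_powr_mult_bounded[OF assms, where C = 16])
  fix u :: real
  have "\<bar>(2 - 2 * cos u)\<^sup>2 * cos (m * u)\<bar> \<le> (2 - 2 * cos u)\<^sup>2"
    by (simp add: abs_mult mult_left_le)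
  moreover have "(2 - 2 * cos u)\<^sup>2 \<le> (u\<^sup>2)\<^sup>2"
    by (rule power_mono) (simp_all add: two_minus_two_cos_bounds)
  moreover have "(2 - 2 * cos u)\<^sup>2 \<le> 4\<^sup>2"
    by (rule power_mono) (simp_all add: two_minus_two_cos_bounds)
  ultimately show "\<bar>(2 - 2 * cos u)\<^sup>2 * cos (m * u)\<bar> \<le> u ^ 4"
    and "\<bar>(2 - 2 * cos u)\<^sup>2 * cos (m * u)\<bar> \<le> 16"
    by (simp_all add: power_mult[symmetric])
qed measurable

text \<open>For \<open>\<gamma> < 3\<close> only the zeroth moment of the weights has to vanish, for \<open>\<gamma> > 3\<close> also the
  second one; at \<open>\<gamma> = 3\<close> the factor \<open>cos (pi * \<gamma> / 2)\<close> vanishes.\<close>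
lemma set_integral_powr_stiff_cos:
  fixes \<gamma> m :: real
  assumes \<gamma>: "1 < \<gamma>" "\<gamma> < 4" "\<gamma> \<noteq> 3"
  shows "(LINT u:{0<..}|lborel. u powr (- \<gamma>) * ((2 - 2 * cos u)\<^sup>2 * cos (m * u))) =
         (\<Sum>i\<in>{-2..2::int}. stiff_weight i * \<bar>m + real_of_int i\<bar> powr (\<gamma> - 1)) * pi
           / (2 * cos (pi * \<gamma> / 2)) / Gamma \<gamma>"
proof -
  obtain n :: nat where n: "1 \<le> n" "n \<le> 2" "2 * real n - 1 < \<gamma>" "\<gamma> < 2 * real n + 1"
  proof (cases "\<gamma> < 3")
    case True
    then show ?thesis using \<gamma> by (intro that[of 1]) auto
  next
    case False
    then show ?thesis using \<gamma> by (intro that[of 2]) auto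
  qed
  have moments: "\<forall>k<n. (\<Sum>i\<in>{-2..2::int}. stiff_weight i * ((m + real_of_int i)\<^sup>2) ^ k) = 0"
    using n by (auto intro: stiff_weight_moments)
  have integrable: "set_integrable lborel {0<..}
      (\<lambda>u. u powr (- \<gamma>) * (\<Sum>i\<in>{-2..2::int}. stiff_weight i * cos ((m + real_of_int i) * u)))"
    unfolding sum_stiff_weight_cos using \<gamma> by (intro set_integrable_powr_stiff_cos) auto
  have "Gamma \<gamma> * (LINT u:{0<..}|lborel. u powr (- \<gamma>) * ((2 - 2 * cos u)\<^sup>2 * cos (m * u)))
      = (LINT t:{0<..}|lborel. t powr (\<gamma> - 1) *
           (\<Sum>i\<in>{-2..2::int}. stiff_weight i * (t / (t\<^sup>2 + (m + real_of_int i)\<^sup>2))))"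
    using Gamma_mult_set_integral_powr_cos_sum[OF _ integrable] \<gamma>
    by (simp add: sum_stiff_weight_cos)
  also have "\<dots> = (\<Sum>i\<in>{-2..2::int}. stiff_weight i * \<bar>m + real_of_int i\<bar> powr (\<gamma> - 1)) * pi
                   / (2 * cos (pi * \<gamma> / 2))"
    using n moments by (intro set_integral_powr_sum_div_sq_plus_sq) auto
  finally have Gamma_mult: "Gamma \<gamma> * (LINT u:{0<..}|lborel. u powr (- \<gamma>) * ((2 - 2 * cos u)\<^sup>2 * cos (m * u)))
      = (\<Sum>i\<in>{-2..2::int}. stiff_weight i * \<bar>m + real_of_int i\<bar> powr (\<gamma> - 1)) * pi
          / (2 * cos (pi * \<gamma> / 2))" .
  have "Gamma \<gamma> > 0"
    using \<gamma> by simp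
  then show ?thesis
    unfolding Gamma_mult[symmetric] by simp
qed

section \<open>Fourier transform of the hat functions\<close>

definition tent :: "real \<Rightarrow> real \<Rightarrow> real \<Rightarrow> real" where
  "tent c h t = max 0 (1 - \<bar>t - c\<bar> / h)"

lemma continuous_on_tent: "continuous_on S (tent c h)"
  unfolding tent_def divide_inverse by (intro continuous_intros)

lemma hat_eq_tent:
  fixes x :: "nat \<Rightarrow> real"
  assumes h: "h > 0" and left: "x j - x (j - 1) = h" and right: "x (j + 1) - x j = h"
  shows "hat x j = tent (x j) h"
proof
  fix t
  have neighbours: "x (j - 1) = x j - h" "x (j + 1) = x j + h"
    using left right by simp_all
  show "hat x j t = tent (x j) h t"
    unfolding hat_def tent_def neighbours using h by (auto simp: abs_if field_simps max_def)
qed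

lemma has_integral_affine_mult_exp:
  fixes \<xi> s r a b :: real
  assumes \<xi>: "\<xi> \<noteq> 0" and "a \<le> b"
  defines "A \<equiv> \<lambda>z::complex. exp (- \<i> * z * of_real \<xi>) *
                   (\<i> * (of_real s * z + of_real r) / of_real \<xi> + of_real s / (of_real \<xi>)\<^sup>2)"
  shows "((\<lambda>t. complex_of_real (s * t + r) * exp (- \<i> * complex_of_real (t * \<xi>)))
            has_integral (A b - A a)) {a..b}"
proof -
  have "(A has_field_derivative ((of_real s * z + of_real r) * exp (- \<i> * z * of_real \<xi>))) (at z)" for z
  proof -
    have "(A has_field_derivative (exp (- \<i> * z * of_real \<xi>) * (- \<i> * of_real \<xi>) *
            (\<i> * (of_real s * z + of_real r) / of_real \<xi> + of_real s / (of_real \<xi>)\<^sup>2) +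
            exp (- \<i> * z * of_real \<xi>) * (\<i> * of_real s / of_real \<xi>))) (at z)"
      unfolding A_def using \<xi> by (auto intro!: derivative_eq_intros)
    moreover have "exp (- \<i> * z * of_real \<xi>) * (- \<i> * of_real \<xi>) *
            (\<i> * (of_real s * z + of_real r) / of_real \<xi> + of_real s / (of_real \<xi>)\<^sup>2) +
            exp (- \<i> * z * of_real \<xi>) * (\<i> * of_real s / of_real \<xi>)
          = (of_real s * z + of_real r) * exp (- \<i> * z * of_real \<xi>)"
      using \<xi> by (simp add: field_simps power2_eq_square)
    ultimately show ?thesis by simp
  qed
  then have "((\<lambda>t. (of_real s * of_real t + of_real r) * exp (- \<i> * of_real t * of_real \<xi>)) has_integral
          (A (complex_of_real b) - A (complex_of_real a))) {a..b}"
    by (intro fundamental_theorem_of_calculus assms ballI has_vector_derivative_real_field)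
  then show ?thesis by (simp add: mult.assoc)
qed

lemma has_integral_tent_mult_exp:
  fixes c h \<xi> :: real
  assumes h: "h > 0" and \<xi>: "\<xi> \<noteq> 0"
  shows "((\<lambda>t. complex_of_real (tent c h t) * exp (- \<i> * complex_of_real (t * \<xi>))) has_integral
           exp (- \<i> * complex_of_real (c * \<xi>)) * complex_of_real ((2 - 2 * cos (h * \<xi>)) / (h * \<xi>\<^sup>2)))
         {c - h..c + h}"
proof -
  define A where "A s r = (\<lambda>z::complex. exp (- \<i> * z * of_real \<xi>) *
                   (\<i> * (of_real s * z + of_real r) / of_real \<xi> + of_real s / (of_real \<xi>)\<^sup>2))"
    for s r :: real
  define \<phi> where "\<phi> t = complex_of_real (tent c h t) * exp (- \<i> * complex_of_real (t * \<xi>))" for t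
  define V where "V = (A (1/h) ((h - c)/h) c - A (1/h) ((h - c)/h) (c - h)) +
                      (A (-1/h) ((c + h)/h) (c + h) - A (-1/h) ((c + h)/h) c)"
  have left: "((\<lambda>t. complex_of_real ((1/h) * t + (h - c)/h) * exp (- \<i> * complex_of_real (t * \<xi>)))
      has_integral (A (1/h) ((h - c)/h) c - A (1/h) ((h - c)/h) (c - h))) {c - h..c}"
    unfolding A_def using has_integral_affine_mult_exp[OF \<xi>, of "c - h" c "1/h" "(h - c)/h"] h by simp
  have right: "((\<lambda>t. complex_of_real ((-1/h) * t + (c + h)/h) * exp (- \<i> * complex_of_real (t * \<xi>)))
      has_integral (A (-1/h) ((c + h)/h) (c + h) - A (-1/h) ((c + h)/h) c)) {c..c + h}"
    unfolding A_def using has_integral_affine_mult_exp[OF \<xi>, of c "c + h" "-1/h" "(c + h)/h"] h by simp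
  have "(\<phi> has_integral (A (1/h) ((h - c)/h) c - A (1/h) ((h - c)/h) (c - h))) {c - h..c}"
  proof (rule has_integral_eq[OF _ left])
    fix t assume "t \<in> {c - h..c}"
    then show "complex_of_real ((1/h) * t + (h - c)/h) * exp (- \<i> * complex_of_real (t * \<xi>)) = \<phi> t"
      using h by (auto simp: \<phi>_def tent_def field_simps)
  qed
  moreover have "(\<phi> has_integral (A (-1/h) ((c + h)/h) (c + h) - A (-1/h) ((c + h)/h) c)) {c..c + h}"
  proof (rule has_integral_eq[OF _ right])
    fix t assume "t \<in> {c..c + h}"
    then show "complex_of_real ((-1/h) * t + (c + h)/h) * exp (- \<i> * complex_of_real (t * \<xi>)) = \<phi> t"
      using h by (auto simp: \<phi>_def tent_def field_simps)
  qed
  ultimately have "(\<phi> has_integral V) {c - h..c + h}"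
    unfolding V_def using h by (intro has_integral_combine) auto
  define E0 where "E0 = exp (- \<i> * complex_of_real (c * \<xi>))"
  define ep where "ep = exp (\<i> * complex_of_real (h * \<xi>))"
  define em where "em = exp (- (\<i> * complex_of_real (h * \<xi>)))"
  have "exp (- \<i> * complex_of_real (c - h) * complex_of_real \<xi>) = E0 * ep"
       "exp (- \<i> * complex_of_real (c + h) * complex_of_real \<xi>) = E0 * em"
       "exp (- \<i> * complex_of_real c * complex_of_real \<xi>) = E0"
    unfolding E0_def ep_def em_def exp_add[symmetric] by (simp_all add: algebra_simps)
  then have "V = E0 * ((2 - (ep + em)) / (complex_of_real h * (complex_of_real \<xi>)\<^sup>2))"
    unfolding V_def A_def using h \<xi> by (simp add: field_simps power2_eq_square)
  also have "ep + em = 2 * complex_of_real (cos (h * \<xi>))"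
  proof -
    have "complex_of_real (cos (h * \<xi>)) = cos (complex_of_real (h * \<xi>))"
      by (rule cos_of_real[symmetric])
    also have "\<dots> = (ep + em) / 2"
      unfolding ep_def em_def by (rule cos_exp_eq)
    finally show ?thesis by (simp add: mult.commute)
  qed
  finally have "V = E0 * complex_of_real ((2 - 2 * cos (h * \<xi>)) / (h * \<xi>\<^sup>2))"
    by simp
  with \<open>(\<phi> has_integral V) {c - h..c + h}\<close> show ?thesis
    unfolding \<phi>_def E0_def by simp
qed

lemma integral_lborel_if_has_integral_Icc:
  fixes f :: "real \<Rightarrow> 'a::euclidean_space"
  assumes cont: "continuous_on {a..b} f" and outside: "\<And>t. t \<notin> {a..b} \<Longrightarrow> f t = 0"
    and V: "(f has_integral V) {a..b}"
  shows "integral\<^sup>L lborel f = V"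
proof -
  have restrict: "(\<lambda>t. indicator {a..b} t *\<^sub>R f t) = f" "(\<lambda>t. if t \<in> {a..b} then f t else 0) = f"
    using outside by (auto simp: indicator_def)
  have int: "integrable lborel f"
    using borel_integrable_atLeastAtMost'[OF cont] unfolding set_integrable_def restrict .
  have "((\<lambda>t. if t \<in> {a..b} then f t else 0) has_integral V) UNIV"
    using V by (simp only: has_integral_restrict_UNIV)
  then have "(f has_integral V) UNIV"
    by (simp only: restrict)
  then show ?thesis
    using has_integral_integral_lborel[OF int] by (rule has_integral_unique[rotated])
qed

lemma fourier_tent:
  fixes c h \<xi> :: real
  assumes h: "h > 0" and \<xi>: "\<xi> \<noteq> 0"
  shows "fourier (tent c h) \<xi> = complex_of_real (1 / sqrt (2 * pi)) *
           (exp (- \<i> * complex_of_real (c * \<xi>)) * complex_of_real ((2 - 2 * cos (h * \<xi>)) / (h * \<xi>\<^sup>2)))"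
proof -
  have "continuous_on {c - h..c + h} (\<lambda>t. complex_of_real (tent c h t) * exp (- \<i> * complex_of_real (t * \<xi>)))"
    by (intro continuous_intros continuous_on_compose2[OF continuous_on_tent[of UNIV c h]]) auto
  moreover have "tent c h t = 0" if "t \<notin> {c - h..c + h}" for t
    using that h by (auto simp: tent_def)
  ultimately show ?thesis
    unfolding fourier_def
    by (subst integral_lborel_if_has_integral_Icc[OF _ _ has_integral_tent_mult_exp[OF h \<xi>]]) auto
qed

text \<open>\<open>tent_kernel s (h * \<xi>)\<close> is, up to the factor \<open>h powr (2 - 2 * s) / (2 * pi)\<close>, the density
  \<open>\<bar>\<xi>\<bar> powr (2 * s) * \<bar>fourier (tent c h) \<xi>\<bar>\<^sup>2\<close> of the stiffness integral.\<close>
definition tent_kernel :: "real \<Rightarrow> real \<Rightarrow> real" where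
  "tent_kernel s u = \<bar>u\<bar> powr (2 * s) * (2 - 2 * cos u)\<^sup>2 / u ^ 4"

lemma tent_kernel_minus [simp]: "tent_kernel s (- u) = tent_kernel s u"
  by (simp add: tent_kernel_def)

lemma tent_kernel_0 [simp]: "tent_kernel s 0 = 0"
  by (simp add: tent_kernel_def)

lemma tent_kernel_nonneg: "tent_kernel s u \<ge> 0"
  by (simp add: tent_kernel_def)

lemma tent_kernel_pos_eq:
  assumes "u > 0"
  shows "tent_kernel s u = u powr (- (4 - 2 * s)) * (2 - 2 * cos u)\<^sup>2"
proof -
  have "u powr (- (4 - 2 * s)) = u powr (2 * s) / u powr 4"
    by (simp add: powr_diff[symmetric])
  also have "u powr 4 = u ^ 4"
    using assms by (intro powr_numeral) simp
  finally show ?thesis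
    using assms by (simp add: tent_kernel_def)
qed

lemma
  fixes f :: "real \<Rightarrow> real"
  assumes even: "\<And>x. f (- x) = f x" and "f 0 = 0" and int: "set_integrable lborel {0<..} f"
  shows integrable_even: "integrable lborel f"
    and integral_even: "integral\<^sup>L lborel f = 2 * (LINT x:{0<..}|lborel. f x)"
proof -
  define g where "g x = indicator {0<..} x *\<^sub>R f x" for x
  have g: "integrable lborel g" using int unfolding set_integrable_def g_def .
  then have g_reflected: "integrable lborel (\<lambda>x. g (0 + (-1) * x))"
    by (subst lborel_integrable_real_affine_iff) auto
  have f_eq: "f = (\<lambda>x. g x + g (0 + (-1) * x))"
  proof
    fix x
    show "f x = g x + g (0 + (-1) * x)"
      using \<open>f 0 = 0\<close> even[of x] by (cases "x > 0"; cases "x < 0") (auto simp: g_def indicator_def)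
  qed
  show "integrable lborel f"
    unfolding f_eq using g g_reflected by (rule Bochner_Integration.integrable_add)
  have "integral\<^sup>L lborel g = \<bar>-1\<bar> *\<^sub>R integral\<^sup>L lborel (\<lambda>x. g (0 + (-1) * x))"
    by (rule lborel_integral_real_affine) simp
  moreover have "integral\<^sup>L lborel f = integral\<^sup>L lborel g + integral\<^sup>L lborel (\<lambda>x. g (0 + (-1) * x))"
    by (subst f_eq) (rule Bochner_Integration.integral_add[OF g g_reflected])
  moreover have "integral\<^sup>L lborel g = (LINT x:{0<..}|lborel. f x)"
    by (simp add: set_lebesgue_integral_def g_def[abs_def])
  ultimately show "integral\<^sup>L lborel f = 2 * (LINT x:{0<..}|lborel. f x)"
    by simp
qed

lemma integral_odd_eq_0:
  fixes f :: "real \<Rightarrow> real"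
  assumes odd: "\<And>x. f (- x) = - f x"
  shows "integral\<^sup>L lborel f = 0"
proof -
  have "integral\<^sup>L lborel f = \<bar>-1\<bar> *\<^sub>R integral\<^sup>L lborel (\<lambda>x. f (0 + (-1) * x))"
    by (rule lborel_integral_real_affine) simp
  also have "\<dots> = - integral\<^sup>L lborel f"
    using odd by simp
  finally show ?thesis by simp
qed

lemma integral_lborel_scale:
  fixes g :: "real \<Rightarrow> real"
  assumes h: "h > 0" and g: "integrable lborel g"
  shows "integrable lborel (\<lambda>\<xi>. g (h * \<xi>))"
    and "integral\<^sup>L lborel (\<lambda>\<xi>. g (h * \<xi>)) = integral\<^sup>L lborel g / h"
proof -
  show "integrable lborel (\<lambda>\<xi>. g (h * \<xi>))"
    using lborel_integrable_real_affine_iff[of h g 0] g h by simp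
  have "integral\<^sup>L lborel g = \<bar>h\<bar> *\<^sub>R integral\<^sup>L lborel (\<lambda>x. g (0 + h * x))"
    using h by (intro lborel_integral_real_affine) simp
  then show "integral\<^sup>L lborel (\<lambda>\<xi>. g (h * \<xi>)) = integral\<^sup>L lborel g / h"
    using h by simp
qed

lemma
  fixes s m :: real
  assumes s: "0 < s" "s < 3/2"
  shows integrable_tent_kernel_cos: "integrable lborel (\<lambda>u. tent_kernel s u * cos (m * u))"
    and integral_tent_kernel_cos_eq:
      "integral\<^sup>L lborel (\<lambda>u. tent_kernel s u * cos (m * u)) =
         2 * (LINT u:{0<..}|lborel. u powr (- (4 - 2 * s)) * ((2 - 2 * cos u)\<^sup>2 * cos (m * u)))"
proof -
  have "set_integrable lborel {0<..} (\<lambda>u. u powr (- (4 - 2 * s)) * ((2 - 2 * cos u)\<^sup>2 * cos (m * u)))"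
    using s by (intro set_integrable_powr_stiff_cos) auto
  moreover have "(LINT u:{0<..}|lborel. tent_kernel s u * cos (m * u)) =
      (LINT u:{0<..}|lborel. u powr (- (4 - 2 * s)) * ((2 - 2 * cos u)\<^sup>2 * cos (m * u)))"
    by (intro set_lebesgue_integral_cong) (auto simp: tent_kernel_pos_eq)
  moreover have "set_integrable lborel {0<..} (\<lambda>u. tent_kernel s u * cos (m * u)) \<longleftrightarrow>
      set_integrable lborel {0<..} (\<lambda>u. u powr (- (4 - 2 * s)) * ((2 - 2 * cos u)\<^sup>2 * cos (m * u)))"
    unfolding set_integrable_def
    by (intro Bochner_Integration.integrable_cong) (auto simp: tent_kernel_pos_eq indicator_def)
  ultimately show "integrable lborel (\<lambda>u. tent_kernel s u * cos (m * u))"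
    and "integral\<^sup>L lborel (\<lambda>u. tent_kernel s u * cos (m * u)) =
         2 * (LINT u:{0<..}|lborel. u powr (- (4 - 2 * s)) * ((2 - 2 * cos u)\<^sup>2 * cos (m * u)))"
    by (simp_all add: integrable_even integral_even)
qed

lemma
  fixes s m :: real
  assumes "0 < s" "s < 3/2"
  shows integrable_tent_kernel_sin: "integrable lborel (\<lambda>u. tent_kernel s u * sin (m * u))"
    and integral_tent_kernel_sin: "integral\<^sup>L lborel (\<lambda>u. tent_kernel s u * sin (m * u)) = 0"
proof -
  have "integrable lborel (tent_kernel s)"
    using integrable_tent_kernel_cos[OF assms, of 0] by simp
  then show "integrable lborel (\<lambda>u. tent_kernel s u * sin (m * u))"
  proof (rule Bochner_Integration.integrable_bound)
    show "AE u in lborel. norm (tent_kernel s u * sin (m * u)) \<le> norm (tent_kernel s u)"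
      by (intro AE_I2) (simp add: abs_mult tent_kernel_nonneg mult_left_le)
  qed (simp add: tent_kernel_def)
  show "integral\<^sup>L lborel (\<lambda>u. tent_kernel s u * sin (m * u)) = 0"
    by (rule integral_odd_eq_0) simp
qed

section \<open>The stiffness matrix on a uniform grid\<close>

lemma integral_tent_kernel_cos:
  fixes s m :: real
  assumes s: "0 < s" "s < 3/2" "s \<noteq> 1/2"
  shows "integral\<^sup>L lborel (\<lambda>u. tent_kernel s u * cos (m * u)) =
           (\<Sum>i\<in>{-2..2::int}. stiff_weight i * \<bar>m + real_of_int i\<bar> powr (3 - 2 * s)) * pi
             / cos (pi * s) / Gamma (4 - 2 * s)"
proof -
  have shift: "pi * (4 - 2 * s) / 2 = 2 * pi - pi * s"
    by (simp add: field_simps)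
  have "integral\<^sup>L lborel (\<lambda>u. tent_kernel s u * cos (m * u)) =
      2 * (LINT u:{0<..}|lborel. u powr (- (4 - 2 * s)) * ((2 - 2 * cos u)\<^sup>2 * cos (m * u)))"
    using s(1,2) by (rule integral_tent_kernel_cos_eq)
  also have "\<dots> = 2 * ((\<Sum>i\<in>{-2..2::int}. stiff_weight i * \<bar>m + real_of_int i\<bar> powr ((4 - 2 * s) - 1))
                      * pi / (2 * cos (pi * (4 - 2 * s) / 2)) / Gamma (4 - 2 * s))"
    using s by (subst set_integral_powr_stiff_cos) auto
  also have "cos (pi * (4 - 2 * s) / 2) = cos (pi * s)"
    unfolding shift cos_diff by simp
  finally show ?thesis
    by simp
qed

lemma tent_kernel_scaled:
  fixes h s \<xi> :: real
  assumes h: "h > 0" and \<xi>: "\<xi> \<noteq> 0"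
  shows "h powr (2 - 2 * s) / (2 * pi) * tent_kernel s (h * \<xi>) =
         \<bar>\<xi>\<bar> powr (2 * s) * ((2 - 2 * cos (h * \<xi>)) / (h * \<xi>\<^sup>2))\<^sup>2 / (2 * pi)"
proof -
  define A where "A = \<bar>\<xi>\<bar> powr (2 * s)"
  define c where "c = 2 - 2 * cos (h * \<xi>)"
  define H where "H = h powr (2 - 2 * s)"
  define G where "G = h powr (2 * s)"
  have HG: "H * G = h\<^sup>2"
    unfolding H_def G_def using h by (simp add: powr_add[symmetric])
  have "tent_kernel s (h * \<xi>) = G * A * c\<^sup>2 / (h * \<xi>) ^ 4"
    unfolding tent_kernel_def A_def c_def G_def using h by (simp add: abs_mult powr_mult)
  then have "H / (2 * pi) * tent_kernel s (h * \<xi>) = (H * G) * (A * c\<^sup>2 / (h * \<xi>) ^ 4) / (2 * pi)"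
    by (simp add: mult_ac)
  also have "\<dots> = A * (c / (h * \<xi>\<^sup>2))\<^sup>2 / (2 * pi)"
    unfolding HG using h \<xi> by (simp add: field_simps power2_eq_square power4_eq_xxxx)
  finally show ?thesis
    unfolding A_def c_def H_def .
qed

lemma exp_mult_cnj_exp_phase:
  fixes cj ck h n \<xi> :: real
  assumes "cj - ck = n * h"
  shows "exp (- \<i> * complex_of_real (cj * \<xi>)) * cnj (exp (- \<i> * complex_of_real (ck * \<xi>)))
      = complex_of_real (cos (n * (h * \<xi>))) - \<i> * complex_of_real (sin (n * (h * \<xi>)))"
proof -
  have "exp (- \<i> * complex_of_real (cj * \<xi>)) * cnj (exp (- \<i> * complex_of_real (ck * \<xi>)))
      = exp (- \<i> * complex_of_real (cj * \<xi>)) * exp (\<i> * complex_of_real (ck * \<xi>))"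
    by (simp add: exp_cnj)
  also have "\<dots> = exp (\<i> * complex_of_real (- (n * (h * \<xi>))))"
    unfolding exp_add[symmetric] using assms
    by (simp add: algebra_simps of_real_mult[symmetric] of_real_diff[symmetric] del: of_real_mult of_real_diff)
  also have "\<dots> = cos (complex_of_real (- (n * (h * \<xi>)))) + \<i> * sin (complex_of_real (- (n * (h * \<xi>))))"
    by (rule exp_Euler)
  finally show ?thesis
    by (simp add: cos_of_real[symmetric] sin_of_real[symmetric])
qed

lemma fourier_tent_product:
  fixes cj ck h s \<xi> n :: real
  assumes h: "h > 0" and s: "s > 0" and d: "cj - ck = n * h"
  shows "complex_of_real (\<bar>\<xi>\<bar> powr (2 * s)) * fourier (tent cj h) \<xi> * cnj (fourier (tent ck h) \<xi>)
     = complex_of_real (h powr (2 - 2 * s) / (2 * pi) * (tent_kernel s (h * \<xi>) * cos (n * (h * \<xi>))))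
       - \<i> * complex_of_real (h powr (2 - 2 * s) / (2 * pi) * (tent_kernel s (h * \<xi>) * sin (n * (h * \<xi>))))"
proof (cases "\<xi> = 0")
  case True
  then show ?thesis using s by simp
next
  case False
  define K where "K = (2 - 2 * cos (h * \<xi>)) / (h * \<xi>\<^sup>2)"
  define P where "P = \<bar>\<xi>\<bar> powr (2 * s) * K\<^sup>2 / (2 * pi)"
  have normalization: "complex_of_real (1 / sqrt (2 * pi)) * complex_of_real (1 / sqrt (2 * pi)) =
      complex_of_real (1 / (2 * pi))"
    by (simp add: of_real_mult[symmetric] del: of_real_mult)
  have "complex_of_real (\<bar>\<xi>\<bar> powr (2 * s)) * fourier (tent cj h) \<xi> * cnj (fourier (tent ck h) \<xi>)
      = complex_of_real (\<bar>\<xi>\<bar> powr (2 * s)) *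
          (complex_of_real (1 / sqrt (2 * pi)) * complex_of_real (1 / sqrt (2 * pi))) *
          complex_of_real K * complex_of_real K *
          (exp (- \<i> * complex_of_real (cj * \<xi>)) * cnj (exp (- \<i> * complex_of_real (ck * \<xi>))))"
    unfolding fourier_tent[OF h False] K_def[symmetric]
    by (simp only: complex_cnj_mult complex_cnj_complex_of_real mult_ac)
  also have "\<dots> = complex_of_real P * (complex_of_real (cos (n * (h * \<xi>))) -
                                       \<i> * complex_of_real (sin (n * (h * \<xi>))))"
    unfolding normalization exp_mult_cnj_exp_phase[OF d] P_def by (simp add: power2_eq_square)
  also have "\<dots> = complex_of_real (P * cos (n * (h * \<xi>))) - \<i> * complex_of_real (P * sin (n * (h * \<xi>)))"
    by (simp add: algebra_simps)
  finally have product: "complex_of_real (\<bar>\<xi>\<bar> powr (2 * s)) * fourier (tent cj h) \<xi> *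
      cnj (fourier (tent ck h) \<xi>) =
      complex_of_real (P * cos (n * (h * \<xi>))) - \<i> * complex_of_real (P * sin (n * (h * \<xi>)))" .
  have scaled_kernel: "h powr (2 - 2 * s) / (2 * pi) * (tent_kernel s (h * \<xi>) * X) = P * X" for X
    unfolding P_def K_def tent_kernel_scaled[OF h False, symmetric] by (rule mult.assoc[symmetric])
  show ?thesis
    unfolding scaled_kernel by (rule product)
qed

lemma integral_complex_of_real_minus_i:
  fixes f g :: "real \<Rightarrow> real"
  assumes "integrable lborel f" and "integrable lborel g"
  shows "(LINT x|lborel. complex_of_real (f x) - \<i> * complex_of_real (g x)) =
         complex_of_real (integral\<^sup>L lborel f) - \<i> * complex_of_real (integral\<^sup>L lborel g)"
proof -
  have f: "complex_integrable lborel (\<lambda>x. complex_of_real (f x))"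
    using assms(1) by (simp only: complex_of_real_integrable_eq)
  have "complex_integrable lborel (\<lambda>x. complex_of_real (g x))"
    using assms(2) by (simp only: complex_of_real_integrable_eq)
  then have g: "complex_integrable lborel (\<lambda>x. \<i> * complex_of_real (g x))"
    by (rule integrable_mult_right)
  show ?thesis
    by (simp only: Bochner_Integration.integral_diff[OF f g] integral_mult_right_zero
                   integral_complex_of_real)
qed

lemma integral_fractional_tents:
  fixes cj ck h s n :: real
  assumes h: "h > 0" and s: "0 < s" "s < 3/2" "s \<noteq> 1/2" and d: "cj - ck = n * h"
  shows "(LINT \<xi>|lborel. complex_of_real (\<bar>\<xi>\<bar> powr (2 * s)) *
            fourier (tent cj h) \<xi> * cnj (fourier (tent ck h) \<xi>))
     = complex_of_real (C_hat s * h powr (1 - 2 * s) *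
         (\<Sum>i\<in>{-2..2::int}. stiff_weight i * \<bar>\<bar>n\<bar> + real_of_int i\<bar> powr (3 - 2 * s)))"
proof -
  define C0 where "C0 = h powr (2 - 2 * s) / (2 * pi)"
  define S where "S = (\<Sum>i\<in>{-2..2::int}. stiff_weight i * \<bar>\<bar>n\<bar> + real_of_int i\<bar> powr (3 - 2 * s))"
  have cos_abs: "cos (n * u) = cos (\<bar>n\<bar> * u)" for u
    by (cases "n \<ge> 0") auto
  have cos_part: "integrable lborel (\<lambda>u. tent_kernel s u * cos (n * u))"
      "integral\<^sup>L lborel (\<lambda>u. tent_kernel s u * cos (n * u)) = S * pi / cos (pi * s) / Gamma (4 - 2 * s)"
    unfolding cos_abs S_def using s by (simp_all add: integrable_tent_kernel_cos integral_tent_kernel_cos)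
  note sin_part = integrable_tent_kernel_sin[OF s(1,2), of n] integral_tent_kernel_sin[OF s(1,2), of n]
  have "(LINT \<xi>|lborel. complex_of_real (\<bar>\<xi>\<bar> powr (2 * s)) *
          fourier (tent cj h) \<xi> * cnj (fourier (tent ck h) \<xi>))
      = (LINT \<xi>|lborel. complex_of_real (C0 * (tent_kernel s (h * \<xi>) * cos (n * (h * \<xi>))))
          - \<i> * complex_of_real (C0 * (tent_kernel s (h * \<xi>) * sin (n * (h * \<xi>)))))"
    unfolding C0_def fourier_tent_product[OF h s(1) d] ..
  also have "\<dots> = complex_of_real (C0 * (S * pi / cos (pi * s) / Gamma (4 - 2 * s)) / h)"
    using integral_lborel_scale[OF h cos_part(1)] integral_lborel_scale[OF h sin_part(1)]
    by (subst integral_complex_of_real_minus_i) (simp_all add: cos_part(2) sin_part(2))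
  also have "C0 * (S * pi / cos (pi * s) / Gamma (4 - 2 * s)) / h = C_hat s * h powr (1 - 2 * s) * S"
  proof -
    have "h powr (2 - 2 * s) = h powr ((1 - 2 * s) + 1)"
      by simp
    also have "\<dots> = h powr (1 - 2 * s) * h powr 1"
      by (rule powr_add)
    also have "\<dots> = h powr (1 - 2 * s) * h"
      using h by simp
    finally show ?thesis
      using h unfolding C0_def C_hat_def by (simp add: field_simps mult.commute[of s pi])
  qed
  finally show ?thesis
    unfolding S_def .
qed

lemma uniform_nodes:
  fixes x :: "nat \<Rightarrow> real"
  assumes "x 0 = a" and "\<And>j. 1 \<le> j \<Longrightarrow> j \<le> N \<Longrightarrow> x j - x (j - 1) = h" and "j \<le> N"
  shows "x j = a + real j * h"
  using assms(3)
proof (induction j)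
  case (Suc j)
  then have "x (Suc j) - x j = h" using assms(2)[of "Suc j"] by simp
  with Suc show ?case by (simp add: algebra_simps)
qed (simp add: assms(1))

lemma frac_stiff_uniform:
  fixes x :: "nat \<Rightarrow> real" and a h s :: real and N :: nat
  assumes "x 0 = a" and h: "h > 0" and step: "\<And>j. 1 \<le> j \<Longrightarrow> j \<le> N \<Longrightarrow> x j - x (j - 1) = h"
    and s: "0 < s" "s < 3 / 2" "s \<noteq> 1 / 2"
    and j: "1 \<le> j" "j \<le> N - 1" and k: "1 \<le> k" "k \<le> N - 1"
  shows "frac_stiff s x j k = complex_of_real (C_hat s * h powr (1 - 2 * s) *
           (\<Sum>i\<in>{-2..2::int}. stiff_weight i * \<bar>real_of_int (\<bar>int k - int j\<bar> + i)\<bar> powr (3 - 2 * s)))"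
proof -
  have tents: "hat x i = tent (x i) h" if "1 \<le> i" "i \<le> N - 1" for i
    using that h step[of i] step[of "i + 1"] by (intro hat_eq_tent) simp_all
  define n where "n = real_of_int (int j - int k)"
  have nodes: "x i = a + real i * h" if "i \<le> N" for i
    using assms(1) step that by (rule uniform_nodes)
  have distance: "x j - x k = n * h"
    using nodes[of j] nodes[of k] j k by (simp add: n_def algebra_simps)
  have shift: "\<bar>n\<bar> + real_of_int i = real_of_int (\<bar>int k - int j\<bar> + i)" for i
    by (simp add: n_def)
  show ?thesis
    unfolding frac_stiff_def tents[OF j] tents[OF k]
    using integral_fractional_tents[OF h s distance] unfolding shift .
qed

theorem mainTheorem3:
  fixes x :: "nat \<Rightarrow> real" and a b h s :: real and N :: nat
  assumes "x 0 = a" and "x N = b" and "h > 0"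
    and "\<And>j. 1 \<le> j \<Longrightarrow> j \<le> N \<Longrightarrow> x j - x (j - 1) = h"
    and "0 < s" and "s < 3 / 2" and "s \<noteq> 1 / 2"
  shows "(\<forall>j k. 1 \<le> j \<and> j \<le> N - 1 \<and> 1 \<le> k \<and> k \<le> N - 1 \<longrightarrow>
            frac_stiff s x j k =
              complex_of_real (C_hat s * h powr (1 - 2 * s) *
                (\<Sum>i\<in>{-2..2::int}. stiff_weight i *
                   \<bar>real_of_int (\<bar>int k - int j\<bar> + i)\<bar> powr (3 - 2 * s))))
       \<and> (\<forall>j k j' k'. 1 \<le> j \<and> j \<le> N - 1 \<and> 1 \<le> k \<and> k \<le> N - 1 \<and>
            1 \<le> j' \<and> j' \<le> N - 1 \<and> 1 \<le> k' \<and> k' \<le> N - 1 \<and>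
            int k - int j = int k' - int j' \<longrightarrow> frac_stiff s x j k = frac_stiff s x j' k')"
proof -
  \<comment> \<open>Only the spacing of the nodes matters.\<close>
  define S where "S d = complex_of_real (C_hat s * h powr (1 - 2 * s) *
    (\<Sum>i\<in>{-2..2::int}. stiff_weight i * \<bar>real_of_int (\<bar>d\<bar> + i)\<bar> powr (3 - 2 * s)))" for d :: int
  have entries: "frac_stiff s x j k = S (int k - int j)"
    if "1 \<le> j \<and> j \<le> N - 1 \<and> 1 \<le> k \<and> k \<le> N - 1" for j k
    unfolding S_def using assms that by (intro frac_stiff_uniform[of x a h N s]) auto
  show ?thesis
    unfolding S_def[symmetric] using entries by (metis (no_types, lifting))
qed

end
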